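(* Let $\mathcal{X}$ be an input set, $\mathcal{Y}$ an output set, and $\mathcal{F}$ a set of models $f:\mathcal{X}\to\mathcal{Y}$. Let $n,m\ge 1$. For $i=1,\dots,n$ let $t_i=(p_i,S_i,\ell_i)$ be a learning task, where $p_i$ is a probability distribution on $\mathcal{X}\times\mathcal{Y}$, $\ell_i:\mathcal{Y}\times\mathcal{Y}\to[0,1]$ is a loss function, and $S_i=\{(x_{i,1},y_{i,1}),\dots,(x_{i,m},y_{i,m})\}$ is a sample of size $m$ drawn i.i.d. from $p_i$, the samples $S_1,\dots,S_n$ being drawn independently of each other. Let $\mathcal{E}$ be a set (of "global parameters") and let $l:\mathcal{E}\to\mathbb{N}$ be the length function of a prefix-free encoding of $\mathcal{E}$ (the meta-encoder). For each $E\in\mathcal{E}$, let $l_E:\bigcup_{k=1}^\infty\mathcal{F}^k\to\mathbb{N}$ be the length function of a prefix-free encoding of $\bigcup_{k=1}^\infty\mathcal{F}^k$ (the multi-task encoder given $E$). Then for any $\delta>0$, with probability at least $1-\delta$ over the sampling of $S_1,\dots,S_n$, for all $E\in\mathcal{E}$ and all $f_1,\dots,f_n\in\mathcal{F}$: $$\mathrm{kl}\Big(\widehat{\mathcal{R}}(f_1,\dots,f_n)\,\Big|\,\mathcal{R}(f_1,\dots,f_n)\Big)\le\frac{\big(l(E)+l_E(f_1,\dots,f_n)\big)\log 2+\log\frac{2\sqrt{mn}}{\delta}}{mn}.$$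
   Context: A (prefix-free) encoding of a set $\mathcal{Z}$ is a map $C:\mathcal{Z}\to\{0,1\}^*$ such that for all $z\neq z'$ in $\mathcal{Z}$, $C(z)$ is not a prefix of $C(z')$; its length function is $z\mapsto$ length of $C(z)$. The multi-task risk is $\mathcal{R}(f_1,\dots,f_n)=\frac1n\sum_{i=1}^n \mathbb{E}_{(x,y)\sim p_i}\ell_i(y,f_i(x))$ and the multi-task empirical risk is $\widehat{\mathcal{R}}(f_1,\dots,f_n)=\frac{1}{mn}\sum_{i=1}^n\sum_{j=1}^m \ell_i(y_{i,j},f_i(x_{i,j}))$. For $q,p\in[0,1]$, $\mathrm{kl}(q|p)=q\log\frac{q}{p}+(1-q)\log\frac{1-q}{1-p}$ is the Kullback–Leibler divergence between Bernoulli distributions with means $q$ and $p$ (with the usual conventions $0\log 0=0$). *)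

theory Defs
  imports "HOL-Probability.Probability" "HOL-Library.Sublist"
begin

definition prefix_free_encoding :: "('z \<Rightarrow> bool list) \<Rightarrow> 'z set \<Rightarrow> bool" where
  "prefix_free_encoding C Z \<longleftrightarrow>
     (\<forall>z\<in>Z. \<forall>z'\<in>Z. z \<noteq> z' \<longrightarrow> \<not> prefix (C z) (C z'))"

definition is_prefix_code_length :: "('z \<Rightarrow> nat) \<Rightarrow> 'z set \<Rightarrow> bool" where
  "is_prefix_code_length L Z \<longleftrightarrow>
     (\<exists>C. prefix_free_encoding C Z \<and> (\<forall>z\<in>Z. L z = length (C z)))"

text \<open>The union over k >= 1 of F^k, tuples represented as nonempty lists.\<close>
definition tuples_of :: "'a set \<Rightarrow> 'a list set" where
  "tuples_of F = {fs. fs \<noteq> [] \<and> set fs \<subseteq> F}"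

definition sample_measure :: "nat \<Rightarrow> nat \<Rightarrow> (nat \<Rightarrow> 'a measure) \<Rightarrow> (nat \<times> nat \<Rightarrow> 'a) measure" where
  "sample_measure n m p = PiM ({..<n} \<times> {..<m}) (\<lambda>(i, j). p i)"

definition mt_emp_risk ::
  "nat \<Rightarrow> nat \<Rightarrow> (nat \<Rightarrow> 'y \<Rightarrow> 'y \<Rightarrow> real) \<Rightarrow> (nat \<times> nat \<Rightarrow> 'x \<times> 'y) \<Rightarrow> (nat \<Rightarrow> 'x \<Rightarrow> 'y) \<Rightarrow> real" where
  "mt_emp_risk n m loss S f =
     (1 / (real m * real n)) * (\<Sum>i<n. \<Sum>j<m. loss i (snd (S (i, j))) (f i (fst (S (i, j)))))"

definition mt_risk ::
  "nat \<Rightarrow> (nat \<Rightarrow> ('x \<times> 'y) measure) \<Rightarrow> (nat \<Rightarrow> 'y \<Rightarrow> 'y \<Rightarrow> real) \<Rightarrow> (nat \<Rightarrow> 'x \<Rightarrow> 'y) \<Rightarrow> real" where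
  "mt_risk n p loss f = (1 / real n) * (\<Sum>i<n. \<integral>z. loss i (snd z) (f i (fst z)) \<partial>(p i))"

text \<open>q log(q/p) with conventions 0 log 0 = 0 and q log(q/0) = +infinity for q > 0.\<close>
definition xlogxy :: "real \<Rightarrow> real \<Rightarrow> ereal" where
  "xlogxy q p = (if q = 0 then 0 else if p = 0 then \<infinity> else ereal (q * ln (q / p)))"

definition kl :: "real \<Rightarrow> real \<Rightarrow> ereal" where
  "kl q p = xlogxy q p + xlogxy (1 - q) (1 - p)"

end

(*
  For fixed E and f_1, ..., f_n the mn losses are independent and [0,1]-valued, so
  Chernoff's method (exponential moments, the chord bound for exp, AM-GM, and the optimal
  tilt) bounds the probability of kl(empirical risk | risk) > eps by exp(-mn eps) for each
  tail, the lower tail being the upper tail of 1 - loss since kl(1-q | 1-p) = kl(q | p).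
  Taking eps = ((l(E) + l_E(f)) log 2 + log(2 sqrt(mn) / delta)) / (mn) makes this at most
  delta 2^-(l(E) + l_E(f)). Concatenating the two codes gives a prefix code on the pairs
  (E, (f_1, ..., f_n)), so by Kraft's inequality these bounds sum to at most delta over
  the countably many pairs. The bad events need not be measurable, so they are covered by
  measurable supersets.
*)
theory Submission
  imports Defs "HOL-Real_Asymp.Real_Asymp"
begin

section \<open>Prefix codes and Kraft's inequality\<close>

lemma prefix_free_encodingD:
  "prefix_free_encoding C Z \<Longrightarrow> z \<in> Z \<Longrightarrow> z' \<in> Z \<Longrightarrow> z \<noteq> z' \<Longrightarrow> \<not> prefix (C z) (C z')"
  unfolding prefix_free_encoding_def by blast

lemma prefix_free_encoding_subset:
  "prefix_free_encoding C Z \<Longrightarrow> Y \<subseteq> Z \<Longrightarrow> prefix_free_encoding C Y"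
  unfolding prefix_free_encoding_def by blast

lemma is_prefix_code_length_subset:
  "is_prefix_code_length L Z \<Longrightarrow> Y \<subseteq> Z \<Longrightarrow> is_prefix_code_length L Y"
  unfolding is_prefix_code_length_def by (meson prefix_free_encoding_subset subsetD)

lemma countable_if_prefix_code_length:
  assumes "is_prefix_code_length L Z"
  shows "countable Z"
proof -
  obtain C where "prefix_free_encoding C Z"
    using assms unfolding is_prefix_code_length_def by blast
  then have "inj_on C Z"
    unfolding prefix_free_encoding_def inj_on_def by fastforce
  then show ?thesis
    by (rule countable_image_inj_on[rotated]) simp
qed

lemma card_prefix_extensions:
  assumes "length u \<le> k"
  shows "card {w :: bool list. length w = k \<and> prefix u w} = 2 ^ (k - length u)"
proof -
  have "{w. length w = k \<and> prefix u w} = (\<lambda>v. u @ v) ` {v. length v = k - length u}"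
    using assms by (auto simp: prefix_def)
  then show ?thesis
    using card_lists_length_eq[of "UNIV :: bool set" "k - length u"]
    by (simp add: card_image inj_on_def)
qed

text \<open>The words of a common length k extending distinct code words are disjoint,
  and the code word C z has 2^(k - length (C z)) of them.\<close>
lemma kraft_inequality:
  assumes "is_prefix_code_length L Z" "finite S" "S \<subseteq> Z"
  shows "(\<Sum>z\<in>S. (1/2::real) ^ L z) \<le> 1"
proof -
  obtain C where C: "prefix_free_encoding C Z" "\<And>z. z \<in> Z \<Longrightarrow> L z = length (C z)"
    using assms(1) unfolding is_prefix_code_length_def by blast
  define k where "k = Max (insert 0 (length ` C ` S))"
  have len: "length (C z) \<le> k" if "z \<in> S" for z
    unfolding k_def using assms(2) that by (intro Max_ge) auto
  define Ext where "Ext z = {w :: bool list. length w = k \<and> prefix (C z) w}" for z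
  have fin_words: "finite {w :: bool list. length w = k}"
    using finite_lists_length_eq[of "UNIV :: bool set" k] by simp
  have fin_Ext: "finite (Ext z)" for z
    unfolding Ext_def by (rule finite_subset[OF _ fin_words]) blast
  have disjoint: "Ext a \<inter> Ext b = {}" if "a \<in> S" "b \<in> S" "a \<noteq> b" for a b
  proof (rule equals0I)
    fix w assume "w \<in> Ext a \<inter> Ext b"
    then have "prefix (C a) w" "prefix (C b) w"
      unfolding Ext_def by auto
    then have "prefix (C a) (C b) \<or> prefix (C b) (C a)"
      by (rule prefix_same_cases)
    then show False
      using prefix_free_encodingD[OF C(1)] assms(3) that by blast
  qed
  have "(\<Sum>z\<in>S. (1/2::real) ^ L z) = (\<Sum>z\<in>S. real (card (Ext z))) / 2 ^ k"
    unfolding sum_divide_distrib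
  proof (rule sum.cong[OF refl])
    fix z assume "z \<in> S"
    then have "real (card (Ext z)) = (2::real) ^ (k - length (C z))"
      using len by (simp add: Ext_def card_prefix_extensions)
    also have "\<dots> = 2 ^ k / 2 ^ L z"
      using len C(2) assms(3) \<open>z \<in> S\<close> by (auto simp: power_diff)
    finally show "(1/2::real) ^ L z = real (card (Ext z)) / 2 ^ k"
      by (simp add: power_one_over)
  qed
  also have "\<dots> = real (card (\<Union>z\<in>S. Ext z)) / 2 ^ k"
    using assms(2) fin_Ext disjoint by (simp add: card_UN_disjoint)
  also have "\<dots> \<le> real (card {w :: bool list. length w = k}) / 2 ^ k"
    using fin_words by (intro divide_right_mono card_mono of_nat_mono) (auto simp: Ext_def)
  also have "\<dots> = 1"
    using card_prefix_extensions[of "[]" k] by simp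
  finally show ?thesis .
qed

lemma prefix_free_encoding_append:
  assumes C: "prefix_free_encoding C E" and D: "\<And>e. e \<in> E \<Longrightarrow> prefix_free_encoding (D e) T"
  shows "prefix_free_encoding (\<lambda>(e, t). C e @ D e t) (E \<times> T)"
proof -
  have "\<not> prefix (C e @ D e t) (C e' @ D e' t')"
    if in_E: "e \<in> E" "e' \<in> E" and in_T: "t \<in> T" "t' \<in> T" and ne: "(e, t) \<noteq> (e', t')"
    for e t e' t'
  proof
    assume pre: "prefix (C e @ D e t) (C e' @ D e' t')"
    have "prefix (C e) (C e' @ D e' t')"
      using prefix_order.trans[OF _ pre] by simp
    then have "prefix (C e) (C e') \<or> prefix (C e') (C e)"
      by (rule prefix_same_cases) simp
    then have "e = e'"
      using prefix_free_encodingD[OF C] in_E by blast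
    then have "prefix (D e t) (D e t')" "t \<noteq> t'"
      using pre ne by auto
    then show False
      using prefix_free_encodingD[OF D[OF in_E(1)]] in_T by blast
  qed
  then show ?thesis
    unfolding prefix_free_encoding_def by auto
qed

lemma is_prefix_code_length_Times:
  assumes "is_prefix_code_length l E" "\<And>e. e \<in> E \<Longrightarrow> is_prefix_code_length (L e) T"
  shows "is_prefix_code_length (\<lambda>(e, t). l e + L e t) (E \<times> T)"
proof -
  obtain C where C: "prefix_free_encoding C E" "\<forall>e\<in>E. l e = length (C e)"
    using assms(1) unfolding is_prefix_code_length_def by blast
  obtain D where D: "\<And>e. e \<in> E \<Longrightarrow> prefix_free_encoding (D e) T \<and> (\<forall>t\<in>T. L e t = length (D e t))"
    using assms(2) unfolding is_prefix_code_length_def by metis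
  have "prefix_free_encoding (\<lambda>(e, t). C e @ D e t) (E \<times> T)"
    using D by (intro prefix_free_encoding_append[OF C(1)]) blast
  moreover have "\<forall>x\<in>E \<times> T. (\<lambda>(e, t). l e + L e t) x = length ((\<lambda>(e, t). C e @ D e t) x)"
    using C(2) D by auto
  ultimately show ?thesis
    unfolding is_prefix_code_length_def by blast
qed

section \<open>Union bounds over prefix codes\<close>

definition outer_measure_le :: "'a measure \<Rightarrow> 'a set \<Rightarrow> real \<Rightarrow> bool" where
  "outer_measure_le M A c \<longleftrightarrow> (\<exists>B \<in> sets M. A \<subseteq> B \<and> measure M B \<le> c)"

lemma outer_measure_leI: "B \<in> sets M \<Longrightarrow> A \<subseteq> B \<Longrightarrow> measure M B \<le> c \<Longrightarrow> outer_measure_le M A c"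
  unfolding outer_measure_le_def by blast

lemma outer_measure_le_empty: "0 \<le> c \<Longrightarrow> outer_measure_le M {} c"
  by (rule outer_measure_leI[of "{}"]) auto

lemma outer_measure_le_subset:
  "A \<subseteq> A' \<Longrightarrow> outer_measure_le M A' c \<Longrightarrow> outer_measure_le M A c"
  unfolding outer_measure_le_def by blast

lemma outer_measure_le_mono:
  "outer_measure_le M A c \<Longrightarrow> c \<le> d \<Longrightarrow> outer_measure_le M A d"
  unfolding outer_measure_le_def by (meson order_trans)

lemma outer_measure_le_Un:
  assumes "outer_measure_le M A c" "outer_measure_le M A' c'"
  shows "outer_measure_le M (A \<union> A') (c + c')"
proof -
  obtain B B' where "B \<in> sets M" "A \<subseteq> B" "measure M B \<le> c"
    and "B' \<in> sets M" "A' \<subseteq> B'" "measure M B' \<le> c'"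
    using assms unfolding outer_measure_le_def by blast
  then show ?thesis
    using measure_Un_le[of B M B'] by (intro outer_measure_leI[of "B \<union> B'"]) auto
qed

lemma (in finite_measure) measure_UN_countable_le:
  assumes "countable X" "\<And>x. x \<in> X \<Longrightarrow> B x \<in> sets M"
    and "\<And>S. finite S \<Longrightarrow> S \<subseteq> X \<Longrightarrow> (\<Sum>x\<in>S. measure M (B x)) \<le> d"
  shows "measure M (\<Union>x\<in>X. B x) \<le> d"
proof (cases "X = {}")
  case True
  then show ?thesis
    using assms(3)[of "{}"] by simp
next
  case False
  \<comment> \<open>the enumeration may repeat elements, hence the increasing finite unions D n\<close>
  define e where "e = from_nat_into X"
  have range_e: "range e = X"
    unfolding e_def using False assms(1) by simp
  define D where "D n = (\<Union>x\<in>e ` {..<n}. B x)" for n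
  have D_sets: "D n \<in> sets M" for n
    unfolding D_def using range_e assms(2) by (intro sets.finite_UN) auto
  have "incseq D"
    by (rule incseq_SucI) (auto simp: D_def lessThan_Suc)
  then have "(\<lambda>n. measure M (D n)) \<longlonglongrightarrow> measure M (\<Union>n. D n)"
    using D_sets by (intro finite_Lim_measure_incseq) auto
  moreover have "measure M (D n) \<le> d" for n
  proof -
    have "measure M (D n) \<le> (\<Sum>x\<in>e ` {..<n}. measure M (B x))"
      unfolding D_def using range_e assms(2) by (intro measure_UNION_le) auto
    also have "\<dots> \<le> d"
      using range_e by (intro assms(3)) auto
    finally show ?thesis .
  qed
  ultimately have "measure M (\<Union>n. D n) \<le> d"
    by (intro LIMSEQ_le_const2) auto
  moreover have "(\<Union>n. D n) = (\<Union>x\<in>X. B x)"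
  proof
    show "(\<Union>n. D n) \<subseteq> (\<Union>x\<in>X. B x)"
      unfolding D_def range_e[symmetric] by blast
    show "(\<Union>x\<in>X. B x) \<subseteq> (\<Union>n. D n)"
      unfolding D_def range_e[symmetric] using lessI by blast
  qed
  ultimately show ?thesis
    by simp
qed

lemma (in prob_space) prefix_code_union_bound:
  assumes "is_prefix_code_length L X" "0 \<le> \<delta>"
    and "\<And>x. x \<in> X \<Longrightarrow> outer_measure_le M (bad x) (\<delta> * (1/2) ^ L x)"
  shows "\<exists>A \<in> events. 1 - \<delta> \<le> prob A \<and> (\<forall>x \<in> X. A \<inter> bad x = {})"
proof -
  obtain B where B: "\<And>x. x \<in> X \<Longrightarrow> B x \<in> events \<and> bad x \<subseteq> B x \<and> prob (B x) \<le> \<delta> * (1/2) ^ L x"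
    using assms(3) unfolding outer_measure_le_def by metis
  have "prob (\<Union>x\<in>X. B x) \<le> \<delta>"
  proof (rule measure_UN_countable_le)
    show "countable X"
      using assms(1) by (rule countable_if_prefix_code_length)
    show "B x \<in> events" if "x \<in> X" for x
      using B[OF that] by blast
    fix S assume S: "finite S" "S \<subseteq> X"
    then have "(\<Sum>x\<in>S. prob (B x)) \<le> (\<Sum>x\<in>S. \<delta> * (1/2) ^ L x)"
      using B by (intro sum_mono) auto
    also have "\<dots> = \<delta> * (\<Sum>x\<in>S. (1/2) ^ L x)"
      by (simp add: sum_distrib_left)
    also have "\<dots> \<le> \<delta>"
      using kraft_inequality[OF assms(1) S] assms(2) by (simp add: mult_left_le)
    finally show "(\<Sum>x\<in>S. prob (B x)) \<le> \<delta>" .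
  qed
  moreover have "(\<Union>x\<in>X. B x) \<in> events"
    using B assms(1) countable_if_prefix_code_length by (intro sets.countable_UN') auto
  ultimately show ?thesis
    using B prob_compl[of "\<Union>x\<in>X. B x"]
    by (intro bexI[of _ "space M - (\<Union>x\<in>X. B x)"]) auto
qed

section \<open>Bernoulli Kullback-Leibler divergence\<close>

definition kl_real :: "real \<Rightarrow> real \<Rightarrow> real" where
  "kl_real q p = q * ln (q / p) + (1 - q) * ln ((1 - q) / (1 - p))"

lemma kl_eq_kl_real: "0 < p \<Longrightarrow> p < 1 \<Longrightarrow> kl q p = ereal (kl_real q p)"
  unfolding kl_def xlogxy_def kl_real_def by auto

lemma kl_one_minus: "kl (1 - q) (1 - p) = kl q p"
  unfolding kl_def by (simp add: add.commute)

lemma kl_real_self: "kl_real p p = 0"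
  unfolding kl_real_def by simp

lemma continuous_on_mult_ln_div:
  assumes "0 < (c::real)"
  shows "continuous_on {0..} (\<lambda>x. x * ln (x / c))"
  unfolding continuous_on_eq_continuous_within
proof
  fix x :: real assume "x \<in> {0..}"
  then consider "x = 0" | "0 < x" by fastforce
  then show "continuous (at x within {0..}) (\<lambda>x. x * ln (x / c))"
  proof cases
    case 1
    have "((\<lambda>x. x * ln (x / c)) \<longlongrightarrow> 0) (at_right 0)"
      using assms by real_asymp
    then show ?thesis
      using 1 by (simp add: continuous_within at_within_Ici_at_right)
  next
    case 2
    have "continuous_on {0<..} (\<lambda>x. x * ln (x / c))"
      using assms by (intro continuous_intros) auto
    then have "isCont (\<lambda>x. x * ln (x / c)) x"
      using 2 by (simp add: continuous_on_eq_continuous_at)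
    then show ?thesis
      by (rule continuous_at_imp_continuous_at_within)
  qed
qed

lemma continuous_on_kl_real:
  assumes "0 < p" "p < 1"
  shows "continuous_on {0..1} (\<lambda>q. kl_real q p)"
proof -
  have "continuous_on {0..1} (\<lambda>q. q * ln (q / p))"
    by (rule continuous_on_subset[OF continuous_on_mult_ln_div[OF assms(1)]]) auto
  moreover have "continuous_on {0..1} (\<lambda>q. (1 - q) * ln ((1 - q) / (1 - p)))"
    using assms by (intro continuous_on_compose2[OF continuous_on_mult_ln_div] continuous_intros) auto
  ultimately show ?thesis
    unfolding kl_real_def by (rule continuous_on_add)
qed

lemma has_real_derivative_kl_real:
  assumes "0 < p" "p < 1" "0 < q" "q < 1"
  shows "((\<lambda>x. kl_real x p) has_real_derivative ln (q / p) - ln ((1 - q) / (1 - p))) (at q)"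
  unfolding kl_real_def
  by (insert assms, (rule derivative_eq_intros refl | simp)+) (simp add: field_simps)

lemma kl_real_mono:
  assumes "0 < p" "p < 1" "p \<le> q" "q \<le> q'" "q' \<le> 1"
  shows "kl_real q p \<le> kl_real q' p"
proof (rule DERIV_nonneg_imp_increasing_open[OF \<open>q \<le> q'\<close>])
  fix x assume "q < x" "x < q'"
  with assms have x: "p < x" "x < 1" by auto
  have "ln ((1 - x) / (1 - p)) \<le> 0" "0 \<le> ln (x / p)"
    using x assms by auto
  then have "0 \<le> ln (x / p) - ln ((1 - x) / (1 - p))"
    by linarith
  moreover have "((\<lambda>q. kl_real q p) has_real_derivative ln (x / p) - ln ((1 - x) / (1 - p))) (at x)"
    using x assms by (intro has_real_derivative_kl_real) auto
  ultimately show "\<exists>y. ((\<lambda>q. kl_real q p) has_real_derivative y) (at x) \<and> 0 \<le> y"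
    by blast
next
  show "continuous_on {q..q'} (\<lambda>q. kl_real q p)"
    using continuous_on_kl_real[OF assms(1,2)] assms by (auto elim: continuous_on_subset)
qed

section \<open>Chernoff bound for independent bounded variables\<close>

lemma exp_mult_le_chord:
  fixes s y :: real
  assumes "0 \<le> s" "0 \<le> y" "y \<le> 1"
  shows "exp (s * y) \<le> 1 + y * (exp s - 1)"
  using convex_onD[OF convex_on_exp[OF assms(1)], of y 0 1] assms by (simp add: algebra_simps)

lemma integral_exp_mult_le_chord:
  fixes f :: "'a \<Rightarrow> real"
  assumes "prob_space M" "f \<in> borel_measurable M" "\<And>z. 0 \<le> f z \<and> f z \<le> 1" "0 \<le> s"
  shows "(\<integral>z. exp (s * f z) \<partial>M) \<le> 1 + (\<integral>z. f z \<partial>M) * (exp s - 1)"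
proof -
  interpret prob_space M by fact
  have "integrable M f"
    using assms by (intro integrable_const_bound[where B=1]) auto
  moreover have "integrable M (\<lambda>z. exp (s * f z))"
    using assms by (intro integrable_const_bound[where B="exp s"]) (auto intro!: mult_left_le)
  ultimately have "(\<integral>z. exp (s * f z) \<partial>M) \<le> (\<integral>z. 1 + f z * (exp s - 1) \<partial>M)"
    using assms by (intro integral_mono exp_mult_le_chord) auto
  also have "\<dots> = 1 + (\<integral>z. f z \<partial>M) * (exp s - 1)"
    using \<open>integrable M f\<close> by (simp add: prob_space)
  finally show ?thesis .
qed

lemma prod_le_mean_power:
  fixes a :: "'i \<Rightarrow> real"
  assumes "finite I" "I \<noteq> {}" "\<And>k. k \<in> I \<Longrightarrow> 0 < a k"
  shows "(\<Prod>k\<in>I. a k) \<le> ((\<Sum>k\<in>I. a k) / card I) ^ card I"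
proof -
  have card: "0 < card I"
    using assms by (simp add: card_gt_0_iff)
  have mean_pos: "0 < (\<Sum>k\<in>I. a k) / card I"
    using assms card by (intro divide_pos_pos sum_pos) auto
  have "ln (\<Prod>k\<in>I. a k) = (\<Sum>k\<in>I. ln (a k))"
    using assms(3) by (intro ln_prod[OF assms(1)]) force
  also have "\<dots> = card I * (\<Sum>k\<in>I. (1 / card I) * ln (a k))"
    using card by (simp add: sum_divide_distrib[symmetric])
  also have "\<dots> \<le> card I * ln (\<Sum>k\<in>I. (1 / card I) *\<^sub>R a k)"
    using assms card by (intro mult_left_mono concave_on_sum[OF _ _ ln_concave]) auto
  also have "\<dots> = ln (((\<Sum>k\<in>I. a k) / card I) ^ card I)"
    using mean_pos by (simp add: ln_realpow sum_divide_distrib)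
  finally show ?thesis
    using assms mean_pos by (simp add: prod_pos)
qed

text \<open>The tilt s minimises exp (- s q) (1 + p (exp s - 1)), the Chernoff bound for one
  Bernoulli(p) sample exceeding q.\<close>
lemma chernoff_optimal_tilt:
  fixes p q :: real and N :: nat
  assumes "0 < p" "p < q" "q < 1"
  defines "s \<equiv> ln (q * (1 - p) / (p * (1 - q)))"
  shows "0 < s" and "exp (- s * (N * q)) * (1 + p * (exp s - 1)) ^ N = exp (- N * kl_real q p)"
proof -
  have exp_s: "exp s = q * (1 - p) / (p * (1 - q))"
    using assms unfolding s_def by simp
  show "0 < s"
    using assms mult_strict_right_mono[of p q "1 - p"] unfolding s_def by (simp add: algebra_simps)
  have "1 + p * (exp s - 1) = (1 - p) / (1 - q)"
    using assms unfolding exp_s by (simp add: field_simps)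
  also have "\<dots> ^ N = 1 / exp (N * ln ((1 - q) / (1 - p)))"
    using assms by (simp add: exp_of_nat_mult power_divide)
  finally have "(1 + p * (exp s - 1)) ^ N = 1 / exp (N * ln ((1 - q) / (1 - p)))" .
  moreover have "- s * (N * q) - N * ln ((1 - q) / (1 - p)) = - N * kl_real q p"
  proof -
    have s_split: "s = ln (q / p) - ln ((1 - q) / (1 - p))"
      using assms unfolding s_def by (simp add: ln_div ln_mult)
    show ?thesis
      unfolding kl_real_def s_split by (simp add: algebra_simps)
  qed
  ultimately show "exp (- s * (N * q)) * (1 + p * (exp s - 1)) ^ N = exp (- N * kl_real q p)"
    by (simp add: exp_diff[symmetric])
qed

lemma integral_PiM_prod:
  fixes f :: "'i \<Rightarrow> 'a \<Rightarrow> real"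
  assumes "finite I" "\<And>k. k \<in> I \<Longrightarrow> prob_space (Q k)" "\<And>k. k \<in> I \<Longrightarrow> integrable (Q k) (f k)"
  shows "(\<integral>x. (\<Prod>k\<in>I. f k (x k)) \<partial>PiM I Q) = (\<Prod>k\<in>I. \<integral>z. f k z \<partial>Q k)"
proof -
  \<comment> \<open>product_sigma_finite constrains every factor, so pad the family outside I\<close>
  define Q' where "Q' k = (if k \<in> I then Q k else count_space {undefined})" for k
  interpret Q': prob_space "Q' k" for k
    using assms(2) by (cases "k \<in> I") (auto simp: Q'_def intro!: prob_spaceI)
  interpret product_sigma_finite Q' ..
  have "PiM I Q = PiM I Q'"
    by (rule PiM_cong) (auto simp: Q'_def)
  then show ?thesis
    using product_integral_prod[of I f] assms by (simp add: Q'_def)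
qed

locale bounded_product_sum =
  fixes I :: "'i set" and Q :: "'i \<Rightarrow> 'a measure" and g :: "'i \<Rightarrow> 'a \<Rightarrow> real"
  assumes finite_I: "finite I" and I_nonempty: "I \<noteq> {}"
    and prob_space_Q: "\<And>k. k \<in> I \<Longrightarrow> prob_space (Q k)"
    and g_measurable: "\<And>k. k \<in> I \<Longrightarrow> g k \<in> borel_measurable (Q k)"
    and g_bounded: "\<And>k z. k \<in> I \<Longrightarrow> 0 \<le> g k z \<and> g k z \<le> 1"
begin

definition avg :: "('i \<Rightarrow> 'a) \<Rightarrow> real" where
  "avg x = (\<Sum>k\<in>I. g k (x k)) / card I"

definition mean :: real where
  "mean = (\<Sum>k\<in>I. \<integral>z. g k z \<partial>Q k) / card I"

sublocale P: prob_space "PiM I Q"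
  using prob_space_Q by (rule prob_space_PiM)

lemma card_I_pos: "0 < card I"
  using finite_I I_nonempty by (simp add: card_gt_0_iff)

lemma component_measurable [measurable]:
  assumes "k \<in> I"
  shows "(\<lambda>x. g k (x k)) \<in> borel_measurable (PiM I Q)"
  by (rule measurable_compose[OF measurable_component_singleton[of k I Q, OF assms] g_measurable[OF assms]])

lemma avg_measurable [measurable]: "avg \<in> borel_measurable (PiM I Q)"
  unfolding avg_def by measurable

lemma integrable_g:
  assumes "k \<in> I"
  shows "integrable (Q k) (g k)"
proof -
  interpret prob_space "Q k" using assms by (rule prob_space_Q)
  show ?thesis
    using assms g_measurable g_bounded by (intro integrable_const_bound[where B=1]) auto
qed

lemma avg_bounded: "0 \<le> avg x \<and> avg x \<le> 1"
proof -
  have "(\<Sum>k\<in>I. g k (x k)) \<le> card I"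
    using g_bounded sum_mono[of I "\<lambda>k. g k (x k)" "\<lambda>_. 1"] by simp
  moreover have "0 \<le> (\<Sum>k\<in>I. g k (x k))"
    using g_bounded by (intro sum_nonneg) auto
  ultimately show ?thesis
    unfolding avg_def using card_I_pos by (simp add: pos_divide_le_eq)
qed

lemma integral_g_bounded: "k \<in> I \<Longrightarrow> 0 \<le> (\<integral>z. g k z \<partial>Q k) \<and> (\<integral>z. g k z \<partial>Q k) \<le> 1"
proof -
  assume k: "k \<in> I"
  interpret prob_space "Q k" using k by (rule prob_space_Q)
  show ?thesis
    using g_bounded[OF k] integrable_g[OF k] integral_mono[of "Q k" "g k" "\<lambda>_. 1"]
    by (auto simp: prob_space)
qed

lemma mean_bounded: "0 \<le> mean \<and> mean \<le> 1"
proof -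
  have "(\<Sum>k\<in>I. \<integral>z. g k z \<partial>Q k) \<le> card I"
    using integral_g_bounded sum_mono[of I "\<lambda>k. \<integral>z. g k z \<partial>Q k" "\<lambda>_. 1"] by simp
  moreover have "0 \<le> (\<Sum>k\<in>I. \<integral>z. g k z \<partial>Q k)"
    using integral_g_bounded by (intro sum_nonneg) auto
  ultimately show ?thesis
    unfolding mean_def using card_I_pos by (simp add: pos_divide_le_eq)
qed

lemma integral_avg: "(\<integral>x. avg x \<partial>PiM I Q) = mean"
proof -
  have "(\<integral>x. g k (x k) \<partial>PiM I Q) = (\<integral>z. g k z \<partial>Q k)" if "k \<in> I" for k
  proof -
    have "(\<integral>x. g k (x k) \<partial>PiM I Q) = (\<integral>z. g k z \<partial>distr (PiM I Q) (Q k) (\<lambda>x. x k))"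
      using that g_measurable by (simp add: integral_distr)
    then show ?thesis
      using that prob_space_Q by (simp add: distr_PiM_component)
  qed
  moreover have "integrable (PiM I Q) (\<lambda>x. g k (x k))" if "k \<in> I" for k
    using that g_bounded by (intro P.integrable_const_bound[where B=1]) auto
  ultimately show ?thesis
    unfolding avg_def mean_def by simp
qed

lemma integral_one_minus:
  assumes "k \<in> I"
  shows "(\<integral>z. 1 - g k z \<partial>Q k) = 1 - (\<integral>z. g k z \<partial>Q k)"
proof -
  interpret prob_space "Q k" using assms by (rule prob_space_Q)
  show ?thesis
    using integrable_g[OF assms] by (simp add: prob_space)
qed

lemma bounded_product_sum_one_minus: "bounded_product_sum I Q (\<lambda>k z. 1 - g k z)"
  using finite_I I_nonempty prob_space_Q g_measurable g_bounded
  by (intro bounded_product_sum.intro borel_measurable_diff borel_measurable_const) auto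

lemma prob_sum_ge_le:
  assumes "0 < s"
  shows "P.prob {x \<in> space (PiM I Q). c \<le> (\<Sum>k\<in>I. g k (x k))}
           \<le> exp (- s * c) * (\<Prod>k\<in>I. 1 + (\<integral>z. g k z \<partial>Q k) * (exp s - 1))"
proof -
  have exp_sum: "exp (s * (\<Sum>k\<in>I. g k (x k))) = (\<Prod>k\<in>I. exp (s * g k (x k)))" for x
    using finite_I by (simp add: sum_distrib_left exp_sum)
  have "norm (exp (s * (\<Sum>k\<in>I. g k (x k)))) \<le> exp (s * card I)" for x
    using assms g_bounded sum_mono[of I "\<lambda>k. g k (x k)" "\<lambda>_. 1"] by simp
  then have integrable: "integrable (PiM I Q) (\<lambda>x. exp (s * (\<Sum>k\<in>I. g k (x k))))"
    by (intro P.integrable_const_bound[where B = "exp (s * card I)"]) auto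
  then have "set_integrable (PiM I Q) (space (PiM I Q)) (\<lambda>x. exp (s * (\<Sum>k\<in>I. g k (x k))))"
    unfolding set_integrable_def by (intro integrable_mult_indicator) auto
  then have "P.prob {x \<in> space (PiM I Q). c \<le> (\<Sum>k\<in>I. g k (x k))}
      \<le> exp (- s * c) * (\<integral>x\<in>space (PiM I Q). exp (s * (\<Sum>k\<in>I. g k (x k))) \<partial>PiM I Q)"
    by (rule P.Chernoff_ineq_ge[OF assms]) simp
  also have "(\<integral>x\<in>space (PiM I Q). exp (s * (\<Sum>k\<in>I. g k (x k))) \<partial>PiM I Q)
      = (\<integral>x. exp (s * (\<Sum>k\<in>I. g k (x k))) \<partial>PiM I Q)"
    using integrable by (rule set_integral_space)
  also have "(\<integral>x. exp (s * (\<Sum>k\<in>I. g k (x k))) \<partial>PiM I Q) = (\<Prod>k\<in>I. \<integral>z. exp (s * g k z) \<partial>Q k)"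
    unfolding exp_sum using finite_I prob_space_Q
  proof (rule integral_PiM_prod)
    fix k assume "k \<in> I"
    then interpret prob_space "Q k" by (rule prob_space_Q)
    show "integrable (Q k) (\<lambda>z. exp (s * g k z))"
      using \<open>k \<in> I\<close> g_measurable g_bounded assms
      by (intro integrable_const_bound[where B="exp s"]) (auto intro!: mult_left_le)
  qed
  also have "\<dots> \<le> (\<Prod>k\<in>I. 1 + (\<integral>z. g k z \<partial>Q k) * (exp s - 1))"
    using prob_space_Q g_measurable g_bounded assms
    by (intro prod_mono conjI integral_exp_mult_le_chord Bochner_Integration.integral_nonneg) auto
  finally show ?thesis
    by (simp add: mult_left_mono)
qed

lemma prob_avg_ge_le_exp_kl:
  assumes "0 < mean" "mean < q" "q < 1"
  shows "P.prob {x \<in> space (PiM I Q). q \<le> avg x} \<le> exp (- real (card I) * kl_real q mean)"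
proof -
  define N where "N = card I"
  define s where "s = ln (q * (1 - mean) / (mean * (1 - q)))"
  have s: "0 < s" "exp (- s * (N * q)) * (1 + mean * (exp s - 1)) ^ N = exp (- N * kl_real q mean)"
    unfolding s_def using chernoff_optimal_tilt[OF assms] by auto
  have "{x \<in> space (PiM I Q). q \<le> avg x} = {x \<in> space (PiM I Q). N * q \<le> (\<Sum>k\<in>I. g k (x k))}"
    using card_I_pos by (auto simp: avg_def N_def field_simps)
  then have "P.prob {x \<in> space (PiM I Q). q \<le> avg x}
      \<le> exp (- s * (N * q)) * (\<Prod>k\<in>I. 1 + (\<integral>z. g k z \<partial>Q k) * (exp s - 1))"
    using prob_sum_ge_le[OF s(1)] by simp
  also have "(\<Prod>k\<in>I. 1 + (\<integral>z. g k z \<partial>Q k) * (exp s - 1))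
      \<le> ((\<Sum>k\<in>I. 1 + (\<integral>z. g k z \<partial>Q k) * (exp s - 1)) / N) ^ N"
    unfolding N_def using finite_I I_nonempty integral_g_bounded s(1)
    by (intro prod_le_mean_power) (auto intro: add_pos_nonneg)
  also have "(\<Sum>k\<in>I. 1 + (\<integral>z. g k z \<partial>Q k) * (exp s - 1)) = N + N * mean * (exp s - 1)"
    using card_I_pos by (simp add: sum.distrib sum_distrib_right[symmetric] mean_def N_def)
  also have "(N + N * mean * (exp s - 1)) / N = 1 + mean * (exp s - 1)"
    using card_I_pos by (simp add: N_def field_simps)
  finally show ?thesis
    using s(2) by (simp add: N_def mult_left_mono)
qed

lemma prob_avg_ne_0:
  assumes "mean = 0"
  shows "P.prob {x \<in> space (PiM I Q). avg x \<noteq> 0} = 0"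
proof (rule P.prob_eq_0_AE)
  have "integrable (PiM I Q) avg"
    using avg_bounded by (intro P.integrable_const_bound[where B=1]) auto
  then have "AE x in PiM I Q. avg x = 0"
    using integral_nonneg_eq_0_iff_AE[of "PiM I Q" avg] integral_avg assms avg_bounded by simp
  then show "AE x in PiM I Q. \<not> avg x \<noteq> 0"
    by simp
qed

lemma upper_kl_tail:
  fixes \<epsilon> :: real
  assumes "0 < \<epsilon>"
  shows "outer_measure_le (PiM I Q) {x \<in> space (PiM I Q). mean \<le> avg x \<and> ereal \<epsilon> < kl (avg x) mean}
           (exp (- real (card I) * \<epsilon>))"
proof -
  let ?bad = "{x \<in> space (PiM I Q). mean \<le> avg x \<and> ereal \<epsilon> < kl (avg x) mean}"
  consider "mean = 0" | "mean = 1" | "0 < mean" "mean < 1" "kl_real 1 mean \<le> \<epsilon>"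
    | "0 < mean" "mean < 1" "\<epsilon> < kl_real 1 mean"
    using mean_bounded by fastforce
  then show ?thesis
  proof cases
    case 1
    then have "?bad \<subseteq> {x \<in> space (PiM I Q). avg x \<noteq> 0}"
      using assms by (auto simp: kl_def xlogxy_def)
    moreover have "{x \<in> space (PiM I Q). avg x \<noteq> 0} \<in> P.events"
      by measurable
    ultimately show ?thesis
      using prob_avg_ne_0[OF 1] by (intro outer_measure_leI) auto
  next
    case 2
    have "kl (avg x) mean = 0" if "mean \<le> avg x" for x
    proof -
      have "avg x = 1"
        using that 2 avg_bounded[of x] by simp
      then show ?thesis
        using 2 by (simp add: kl_def xlogxy_def)
    qed
    then have empty: "?bad = {}"
      using assms by auto
    show ?thesis
      unfolding empty by (rule outer_measure_le_empty) simp
  next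
    case 3
    then have empty: "?bad = {}"
      using kl_real_mono[of mean _ 1] kl_eq_kl_real[of mean] avg_bounded by fastforce
    show ?thesis
      unfolding empty by (rule outer_measure_le_empty) simp
  next
    case 4
    have "continuous_on {mean..1} (\<lambda>q. kl_real q mean)"
      by (rule continuous_on_subset[OF continuous_on_kl_real]) (use 4 in auto)
    then obtain q where q: "mean \<le> q" "q \<le> 1" "kl_real q mean = \<epsilon>"
      using IVT'[of "\<lambda>q. kl_real q mean" mean \<epsilon> 1] 4 assms by (auto simp: kl_real_self)
    have q_strict: "mean < q" "q < 1"
      using q 4 assms kl_real_self[of mean] by (auto simp: less_le)
    have "?bad \<subseteq> {x \<in> space (PiM I Q). q \<le> avg x}"
      using kl_real_mono[of mean _ q] kl_eq_kl_real[of mean] q 4 by (force simp: not_le)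
    moreover have "{x \<in> space (PiM I Q). q \<le> avg x} \<in> P.events"
      by measurable
    ultimately show ?thesis
      using prob_avg_ge_le_exp_kl[OF \<open>0 < mean\<close> q_strict] q(3) by (intro outer_measure_leI) auto
  qed
qed

lemma kl_tail_bound:
  fixes \<epsilon> :: real
  assumes "0 < \<epsilon>"
  shows "outer_measure_le (PiM I Q) {x \<in> space (PiM I Q). ereal \<epsilon> < kl (avg x) mean}
           (2 * exp (- real (card I) * \<epsilon>))"
proof -
  interpret C: bounded_product_sum I Q "\<lambda>k z. 1 - g k z"
    by (rule bounded_product_sum_one_minus)
  have C_avg: "C.avg x = 1 - avg x" for x
    using card_I_pos by (simp add: C.avg_def avg_def sum_subtractf field_simps)
  have C_mean: "C.mean = 1 - mean"
    using card_I_pos by (simp add: C.mean_def mean_def integral_one_minus sum_subtractf field_simps)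
  have "outer_measure_le (PiM I Q)
      ({x \<in> space (PiM I Q). mean \<le> avg x \<and> ereal \<epsilon> < kl (avg x) mean}
        \<union> {x \<in> space (PiM I Q). 1 - mean \<le> 1 - avg x \<and> ereal \<epsilon> < kl (1 - avg x) (1 - mean)})
      (exp (- real (card I) * \<epsilon>) + exp (- real (card I) * \<epsilon>))"
    using outer_measure_le_Un[OF upper_kl_tail[OF assms] C.upper_kl_tail[OF assms]]
    unfolding C_avg C_mean .
  moreover have "{x \<in> space (PiM I Q). ereal \<epsilon> < kl (avg x) mean}
      \<subseteq> {x \<in> space (PiM I Q). mean \<le> avg x \<and> ereal \<epsilon> < kl (avg x) mean}
        \<union> {x \<in> space (PiM I Q). 1 - mean \<le> 1 - avg x \<and> ereal \<epsilon> < kl (1 - avg x) (1 - mean)}"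
    using kl_one_minus by fastforce
  ultimately show ?thesis
    unfolding mult_2 by (rule outer_measure_le_subset[rotated])
qed

end

section \<open>The multi-task bound\<close>

lemma mt_emp_risk_map_nth: "mt_emp_risk n m loss S ((!) (map f [0..<n])) = mt_emp_risk n m loss S f"
  unfolding mt_emp_risk_def by simp

lemma mt_risk_map_nth: "mt_risk n p loss ((!) (map f [0..<n])) = mt_risk n p loss f"
  unfolding mt_risk_def by simp

lemma is_prefix_code_length_Times_tuples:
  assumes "1 \<le> n" "is_prefix_code_length l \<E>" "\<forall>E\<in>\<E>. is_prefix_code_length (lE E) (tuples_of F)"
  shows "is_prefix_code_length (\<lambda>(E, t). l E + lE E t) (\<E> \<times> {t. length t = n \<and> set t \<subseteq> F})"
proof -
  have "{t. length t = n \<and> set t \<subseteq> F} \<subseteq> tuples_of F"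
    using assms(1) unfolding tuples_of_def by auto
  then show ?thesis
    using assms(2,3) is_prefix_code_length_subset by (intro is_prefix_code_length_Times) blast+
qed

lemma mt_kl_deviation_bound:
  fixes \<epsilon> :: real
  assumes "1 \<le> n" "1 \<le> m" "\<And>i. i < n \<Longrightarrow> prob_space (p i)"
    and "\<And>i y y'. i < n \<Longrightarrow> 0 \<le> loss i y y' \<and> loss i y y' \<le> 1"
    and "\<And>i. i < n \<Longrightarrow> (\<lambda>z. loss i (snd z) (f i (fst z))) \<in> borel_measurable (p i)"
    and "0 < \<epsilon>"
  shows "outer_measure_le (sample_measure n m p)
           {S \<in> space (sample_measure n m p). ereal \<epsilon> < kl (mt_emp_risk n m loss S f) (mt_risk n p loss f)}
           (2 * exp (- (real m * real n) * \<epsilon>))"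
proof -
  define I where "I = {..<n} \<times> {..<m}"
  interpret bounded_product_sum I "\<lambda>(i, j). p i" "\<lambda>(i, j) z. loss i (snd z) (f i (fst z))"
    using assms(1-5) by (intro bounded_product_sum.intro) (auto simp: I_def lessThan_empty_iff)
  have card: "real (card I) = real m * real n"
    unfolding I_def by (simp add: card_cartesian_product)
  have avg_eq: "avg S = mt_emp_risk n m loss S f" for S
    unfolding avg_def mt_emp_risk_def card unfolding I_def sum.cartesian_product' by simp
  have mean_eq: "mean = mt_risk n p loss f"
    unfolding mean_def mt_risk_def card unfolding I_def sum.cartesian_product'
    using assms(2) by (simp add: sum_distrib_left[symmetric])
  have sample_measure_eq: "sample_measure n m p = PiM I (\<lambda>(i, j). p i)"
    unfolding sample_measure_def I_def ..
  show ?thesis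
    unfolding sample_measure_eq using kl_tail_bound[OF assms(6)] unfolding avg_eq mean_eq card .
qed

lemma occam_radius_pos:
  assumes "1 \<le> N" "0 < \<delta>" "\<delta> < 1"
  shows "0 < (real L * ln 2 + ln (2 * sqrt N / \<delta>)) / N"
proof -
  have "\<delta> < 2 * sqrt N"
    using assms real_sqrt_ge_one[of N] by linarith
  then have "0 < ln (2 * sqrt N / \<delta>)"
    using assms by simp
  then show ?thesis
    using assms by (simp add: add_nonneg_pos)
qed

lemma occam_exp_bound:
  assumes "1 \<le> N" "0 < \<delta>"
  shows "2 * exp (- N * ((real L * ln 2 + ln (2 * sqrt N / \<delta>)) / N)) \<le> \<delta> * (1/2) ^ L"
proof -
  define r where "r = real L * ln 2 + ln (2 * sqrt N / \<delta>)"
  have exp_r: "exp r = 2 ^ L * (2 * sqrt N / \<delta>)"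
    using assms unfolding r_def by (simp add: exp_add exp_of_nat_mult)
  have "2 * exp (- N * (r / N)) = 2 / exp r"
    using assms by (simp add: exp_minus divide_inverse)
  also have "\<dots> = \<delta> * (1/2) ^ L / sqrt N"
    unfolding exp_r using assms by (simp add: field_simps)
  also have "\<dots> \<le> \<delta> * (1/2) ^ L / 1"
    using assms by (intro divide_left_mono) auto
  finally show ?thesis
    by (simp add: r_def)
qed

lemma mt_kl_bound_at_occam_radius:
  assumes "1 \<le> n" "1 \<le> m" "\<forall>i<n. prob_space (p i)"
    and "\<forall>i<n. \<forall>y y'. 0 \<le> loss i y y' \<and> loss i y y' \<le> 1"
    and "\<forall>i<n. \<forall>f\<in>F. (\<lambda>z. loss i (snd z) (f (fst z))) \<in> borel_measurable (p i)"
    and "length t = n" "set t \<subseteq> F" "0 < \<delta>" "\<delta> < 1"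
  shows "outer_measure_le (sample_measure n m p)
           {S \<in> space (sample_measure n m p).
              ereal ((real L * ln 2 + ln (2 * sqrt (real m * real n) / \<delta>)) / (real m * real n))
                < kl (mt_emp_risk n m loss S ((!) t)) (mt_risk n p loss ((!) t))}
           (\<delta> * (1/2) ^ L)"
proof -
  have N: "1 \<le> real m * real n"
    using assms(1,2) by (metis of_nat_1 of_nat_le_iff of_nat_mult one_le_mult_iff One_nat_def)
  have measurable: "(\<lambda>z. loss i (snd z) ((t ! i) (fst z))) \<in> borel_measurable (p i)" if "i < n" for i
    using assms(5,6,7) that nth_mem by blast
  define r where "r = (real L * ln 2 + ln (2 * sqrt (real m * real n) / \<delta>)) / (real m * real n)"
  have r_pos: "0 < r"
    unfolding r_def using N assms(8,9) by (rule occam_radius_pos)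
  have r_exp: "2 * exp (- (real m * real n) * r) \<le> \<delta> * (1/2) ^ L"
    unfolding r_def using N assms(8) by (rule occam_exp_bound)
  have prob: "\<And>i. i < n \<Longrightarrow> prob_space (p i)"
    using assms(3) by blast
  have bounded: "\<And>i y y'. i < n \<Longrightarrow> 0 \<le> loss i y y' \<and> loss i y y' \<le> 1"
    using assms(4) by blast
  show ?thesis
    using outer_measure_le_mono[OF mt_kl_deviation_bound[OF assms(1,2) prob bounded measurable r_pos] r_exp]
    unfolding r_def .
qed

theorem theorem3:
  fixes F :: "('x \<Rightarrow> 'y) set"
    and n m :: nat
    and p :: "nat \<Rightarrow> ('x \<times> 'y) measure"
    and loss :: "nat \<Rightarrow> 'y \<Rightarrow> 'y \<Rightarrow> real"
    and \<E> :: "'e set"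
    and l :: "'e \<Rightarrow> nat"
    and lE :: "'e \<Rightarrow> ('x \<Rightarrow> 'y) list \<Rightarrow> nat"
    and \<delta> :: real
  assumes "n \<ge> 1" and "m \<ge> 1"
    and "\<forall>i<n. prob_space (p i)"
    and "\<forall>i<n. \<forall>y y'. 0 \<le> loss i y y' \<and> loss i y y' \<le> 1"
    and "\<forall>i<n. \<forall>f\<in>F. (\<lambda>z. loss i (snd z) (f (fst z))) \<in> borel_measurable (p i)"
    and "is_prefix_code_length l \<E>"
    and "\<forall>E\<in>\<E>. is_prefix_code_length (lE E) (tuples_of F)"
    and "\<delta> > 0"
  shows "\<exists>A \<in> sets (sample_measure n m p).
           measure (sample_measure n m p) A \<ge> 1 - \<delta> \<and>
           (\<forall>S\<in>A. \<forall>E\<in>\<E>. \<forall>f. (\<forall>i<n. f i \<in> F) \<longrightarrow>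
              kl (mt_emp_risk n m loss S f) (mt_risk n p loss f)
                \<le> ereal (((real (l E) + real (lE E (map f [0..<n]))) * ln 2
                          + ln (2 * sqrt (real m * real n) / \<delta>)) / (real m * real n)))"
proof (cases "\<delta> < 1")
  case False
  then show ?thesis
    by (intro bexI[of _ "{}"]) auto
next
  case True
  define T where "T = {t :: ('x \<Rightarrow> 'y) list. length t = n \<and> set t \<subseteq> F}"
  define rad where "rad E t = ((real (l E) + real (lE E t)) * ln 2
    + ln (2 * sqrt (real m * real n) / \<delta>)) / (real m * real n)" for E t
  define bad where "bad = (\<lambda>(E, t). {S \<in> space (sample_measure n m p).
    ereal (rad E t) < kl (mt_emp_risk n m loss S ((!) t)) (mt_risk n p loss ((!) t))})"
  interpret prob_space "sample_measure n m p"
    unfolding sample_measure_def using assms(3) by (intro prob_space_PiM) auto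
  have "is_prefix_code_length (\<lambda>(E, t). l E + lE E t) (\<E> \<times> T)"
    unfolding T_def by (rule is_prefix_code_length_Times_tuples[OF assms(1,6,7)])
  moreover have "outer_measure_le (sample_measure n m p) (bad x) (\<delta> * (1/2) ^ (case x of (E, t) \<Rightarrow> l E + lE E t))"
    if x_in: "x \<in> \<E> \<times> T" for x
  proof -
    obtain E t where x: "x = (E, t)" and t: "length t = n" "set t \<subseteq> F"
      using x_in unfolding T_def by (cases x) auto
    show ?thesis
      unfolding x bad_def rad_def prod.case of_nat_add[symmetric]
      by (rule mt_kl_bound_at_occam_radius[OF assms(1-5) t assms(8) True])
  qed
  ultimately obtain A where A: "A \<in> events" "1 - \<delta> \<le> prob A" "\<forall>x \<in> \<E> \<times> T. A \<inter> bad x = {}"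
    using prefix_code_union_bound[of _ "\<E> \<times> T" \<delta> bad] assms(8) by (meson less_imp_le)
  have "kl (mt_emp_risk n m loss S f) (mt_risk n p loss f) \<le> ereal (rad E (map f [0..<n]))"
    if "S \<in> A" "E \<in> \<E>" "\<forall>i<n. f i \<in> F" for S E f
  proof -
    have "(E, map f [0..<n]) \<in> \<E> \<times> T"
      using that(2,3) by (auto simp: T_def)
    then have "S \<notin> bad (E, map f [0..<n])"
      using A(3) that(1) by blast
    moreover have "S \<in> space (sample_measure n m p)"
      using A(1) that(1) sets.sets_into_space by blast
    ultimately show ?thesis
      unfolding bad_def by (simp add: not_less mt_emp_risk_map_nth mt_risk_map_nth)
  qed
  then show ?thesis
    unfolding rad_def[symmetric] using A(1,2) by blast
qed

end
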